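(* Let $\mathcal{T}$ be a binary phylogenetic $X$-tree with $n=|X|\ge 4$ leaves. Then there exist $k\ge n/4$ pairs of leaves $\{a_1,b_1\},\dots,\{a_k,b_k\}$, pairwise disjoint as sets, such that (i) for every $i$, the distance $d_{\mathcal{T}}(a_i,b_i)$ is $2$ or $3$; and (ii) for $i\ne j$, the $a_i$–$b_i$ path and the $a_j$–$b_j$ path in $\mathcal{T}$ are edge-disjoint.
   Context: A phylogenetic $X$-tree is a finite tree whose leaves (degree-1 vertices) are bijectively labelled by the elements of $X$; it is binary if every vertex has degree 1 or 3. $d_{\mathcal{T}}(u,v)$ denotes the number of edges on the unique path between vertices $u,v$ of $\mathcal{T}$. *)

theory Defs
  imports Complex_Main
begin

definition graph :: "'v set \<Rightarrow> 'v set set \<Rightarrow> bool" where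
  "graph V E \<longleftrightarrow> finite V \<and> (\<forall>e\<in>E. \<exists>u v. u \<in> V \<and> v \<in> V \<and> u \<noteq> v \<and> e = {u, v})"

definition is_walk :: "'v set set \<Rightarrow> 'v list \<Rightarrow> 'v \<Rightarrow> 'v \<Rightarrow> bool" where
  "is_walk E p u v \<longleftrightarrow> p \<noteq> [] \<and> hd p = u \<and> last p = v \<and>
     (\<forall>i. Suc i < length p \<longrightarrow> {p ! i, p ! Suc i} \<in> E)"

definition is_path :: "'v set set \<Rightarrow> 'v list \<Rightarrow> 'v \<Rightarrow> 'v \<Rightarrow> bool" where
  "is_path E p u v \<longleftrightarrow> is_walk E p u v \<and> distinct p"

definition walk_edges :: "'v list \<Rightarrow> 'v set set" where
  "walk_edges p = {{p ! i, p ! Suc i} | i. Suc i < length p}"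

definition is_tree :: "'v set \<Rightarrow> 'v set set \<Rightarrow> bool" where
  "is_tree V E \<longleftrightarrow> graph V E \<and> V \<noteq> {} \<and> (\<forall>u\<in>V. \<forall>v\<in>V. \<exists>!p. is_path E p u v)"

definition degree :: "'v set set \<Rightarrow> 'v \<Rightarrow> nat" where
  "degree E v = card {e\<in>E. v \<in> e}"

definition leaves :: "'v set \<Rightarrow> 'v set set \<Rightarrow> 'v set" where
  "leaves V E = {v\<in>V. degree E v = 1}"

definition binary_tree :: "'v set \<Rightarrow> 'v set set \<Rightarrow> bool" where
  "binary_tree V E \<longleftrightarrow> is_tree V E \<and> (\<forall>v\<in>V. degree E v = 1 \<or> degree E v = 3)"

definition binary_phylo_tree :: "'v set \<Rightarrow> 'v set set \<Rightarrow> 'x set \<Rightarrow> ('x \<Rightarrow> 'v) \<Rightarrow> bool" where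
  "binary_phylo_tree V E X lab \<longleftrightarrow> binary_tree V E \<and> bij_betw lab X (leaves V E)"

definition tree_dist :: "'v set set \<Rightarrow> 'v \<Rightarrow> 'v \<Rightarrow> nat" where
  "tree_dist E u v = (LEAST n. \<exists>p. is_walk E p u v \<and> length p = Suc n)"

definition path_edges :: "'v set set \<Rightarrow> 'v \<Rightarrow> 'v \<Rightarrow> 'v set set" where
  "path_edges E u v = walk_edges (THE p. is_path E p u v)"

end

theory Submission
  imports Defs
begin

text \<open>
  Call an internal vertex a cherry, a single or bare according as it is adjacent to two, one or
  no leaves; with at least four leaves no internal vertex is adjacent to three leaves. A cherry
  yields two leaves at distance 2, and an edge between two singles yields the leaves hanging off
  its ends, at distance 3. Counting leaves gives n = 2c + s, the handshake lemma together with
  |E| < |V| gives b + 2 \<le> c, and counting the neighbours of the singles then shows that the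
  subgraph induced on the singles has at least s + 3 - 2c edges. Its maximum degree is 2, so a
  greedy matching keeps a quarter of them, and the resulting c + m pairs number more than n/4.
  Pairs built on disjoint sets of inner vertices are disjoint and have edge-disjoint paths,
  because every edge of such a short path has an inner endpoint and inner vertices are not leaves.
\<close>

lemma is_walk_iff_successively:
  "is_walk E p u v \<longleftrightarrow> p \<noteq> [] \<and> hd p = u \<and> last p = v \<and> successively (\<lambda>x y. {x, y} \<in> E) p"
  unfolding is_walk_def successively_conv_nth by blast

lemma walk_edges_subset: "is_walk E p u v \<Longrightarrow> walk_edges p \<subseteq> E"
  unfolding is_walk_def walk_edges_def by blast

lemma successively_remove_loop:
  assumes "successively P (xs @ x # ys @ x # zs)"
  shows "successively P (xs @ x # zs)"
proof -
  have "successively P (xs @ [x])" "successively P (x # zs)"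
    using assms successively_append_iff[of P "xs @ [x]" "ys @ x # zs"]
      successively_append_iff[of P "xs @ x # ys" "x # zs"] by auto
  then show ?thesis
    using successively_append_iff[of P xs "x # zs"] successively_append_iff[of P xs "[x]"] by auto
qed

lemma walk_to_path:
  assumes "is_walk E p u v"
  shows "\<exists>q. is_path E q u v \<and> length q \<le> length p"
  using assms
proof (induction "length p" arbitrary: p rule: less_induct)
  case less
  show ?case
  proof (cases "distinct p")
    case True
    then show ?thesis
      using less.prems unfolding is_path_def by blast
  next
    case False
    then obtain xs x ys zs where p: "p = xs @ [x] @ ys @ [x] @ zs"
      using not_distinct_decomp by blast
    have "is_walk E (xs @ x # zs) u v"
      using less.prems successively_remove_loop[of _ xs x ys zs]
      unfolding p is_walk_iff_successively by (cases xs) auto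
    moreover have "length (xs @ x # zs) < length p"
      unfolding p by simp
    ultimately show ?thesis
      using less.hyps by fastforce
  qed
qed

definition inner_vertices :: "'a list \<Rightarrow> 'a list" where
  "inner_vertices q = butlast (tl q)"

lemma nth_in_inner_vertices:
  "0 < i \<Longrightarrow> Suc i < length q \<Longrightarrow> q ! i \<in> set (inner_vertices q)"
  unfolding inner_vertices_def in_set_conv_nth
  by (rule exI[of _ "i - 1"]) (auto simp: nth_butlast nth_tl)

lemma set_subset_ends_inner_vertices:
  "set q \<subseteq> {hd q, last q} \<union> set (inner_vertices q)"
proof (cases q)
  case (Cons a r)
  then show ?thesis
    unfolding inner_vertices_def
    by (cases r rule: rev_cases) auto
qed simp

lemma walk_edges_meet_inner_vertices:
  assumes "3 \<le> length q" and "e \<in> walk_edges q"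
  obtains x m where "e = {x, m}" "x \<in> set q" "m \<in> set (inner_vertices q)"
proof -
  obtain i where e: "e = {q ! i, q ! Suc i}" and i: "Suc i < length q"
    using assms(2) unfolding walk_edges_def by blast
  show thesis
  proof (cases i)
    case 0
    show thesis
    proof (rule that)
      show "e = {q ! 0, q ! 1}" "q ! 1 \<in> set (inner_vertices q)"
        using 0 e assms(1) nth_in_inner_vertices[of 1 q] by auto
      show "q ! 0 \<in> set q"
        using assms(1) by (intro nth_mem) linarith
    qed
  next
    case Suc
    show thesis
    proof (rule that)
      show "e = {q ! Suc i, q ! i}" "q ! Suc i \<in> set q"
        using e i by (auto simp: insert_commute)
      show "q ! i \<in> set (inner_vertices q)"
        using Suc i by (intro nth_in_inner_vertices) auto
    qed
  qed
qed

lemma ends_adjacent_inner_vertices: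
  assumes "3 \<le> length q" and "x \<in> {hd q, last q}"
  obtains m where "m \<in> set (inner_vertices q)" "{x, m} \<in> walk_edges q"
proof -
  have q: "q \<noteq> []"
    using assms(1) by auto
  consider "x = q ! 0" | "x = q ! (length q - 1)"
    using assms(2) q by (auto simp: hd_conv_nth last_conv_nth)
  then show thesis
  proof cases
    case 1
    show thesis
    proof (rule that)
      show "q ! 1 \<in> set (inner_vertices q)"
        using assms(1) by (intro nth_in_inner_vertices) auto
      show "{x, q ! 1} \<in> walk_edges q"
        using 1 assms(1) unfolding walk_edges_def by fastforce
    qed
  next
    case 2
    show thesis
    proof (rule that)
      show "q ! (length q - 2) \<in> set (inner_vertices q)"
        using assms(1) by (intro nth_in_inner_vertices) auto
      have "{q ! (length q - 2), q ! Suc (length q - 2)} \<in> walk_edges q"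
        using assms(1) unfolding walk_edges_def by fastforce
      moreover have "Suc (length q - 2) = length q - 1"
        using assms(1) by simp
      ultimately show "{x, q ! (length q - 2)} \<in> walk_edges q"
        using 2 by (simp add: insert_commute)
    qed
  qed
qed

lemma distinct_concat_nth_disjoint:
  "distinct (concat (map f xs)) \<Longrightarrow> i < length xs \<Longrightarrow> j < length xs \<Longrightarrow> i \<noteq> j
   \<Longrightarrow> set (f (xs ! i)) \<inter> set (f (xs ! j)) = {}"
proof (induction xs arbitrary: i j)
  case (Cons x xs)
  have sub: "set (f (xs ! k)) \<subseteq> set (concat (map f xs))" if "k < length xs" for k
    using that nth_mem by fastforce
  show ?case
  proof (cases i)
    case 0
    then obtain k where "j = Suc k" "k < length xs"
      using Cons.prems by (cases j) auto
    then show ?thesis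
      using 0 Cons.prems(1) sub[of k] by auto
  next
    case (Suc i')
    then show ?thesis
      using Cons sub[of i'] by (cases j) auto
  qed
qed simp

lemma card_arcs_remove_edge:
  fixes N :: "'a \<Rightarrow> 'a set"
  assumes "finite S" and deg: "\<And>x. x \<in> S \<Longrightarrow> card (N x \<inter> S) \<le> d"
    and sym: "\<And>x y. y \<in> N x \<longleftrightarrow> x \<in> N y" and "x \<in> S" "y \<in> S"
  shows "card (Sigma S (\<lambda>v. N v \<inter> S))
    \<le> card (Sigma (S - {x, y}) (\<lambda>v. N v \<inter> (S - {x, y}))) + 4 * d"
proof -
  let ?S' = "S - {x, y}"
  let ?arcs = "\<lambda>z. {z} \<times> (N z \<inter> S) \<union> (N z \<inter> S) \<times> {z}"
  have fin: "finite (Sigma S (\<lambda>v. N v \<inter> S))" "finite (Sigma ?S' (\<lambda>v. N v \<inter> ?S'))"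
    "finite (?arcs z)" for z
    using assms(1) by auto
  have arcs: "card (?arcs z) \<le> 2 * d" if "z \<in> S" for z
    using deg[OF that] card_Un_le[of "{z} \<times> (N z \<inter> S)" "(N z \<inter> S) \<times> {z}"]
    by (simp add: card_cartesian_product)
  have "Sigma S (\<lambda>v. N v \<inter> S) \<subseteq> Sigma ?S' (\<lambda>v. N v \<inter> ?S') \<union> ?arcs x \<union> ?arcs y"
    using sym by auto
  then have "card (Sigma S (\<lambda>v. N v \<inter> S))
      \<le> card (Sigma ?S' (\<lambda>v. N v \<inter> ?S') \<union> ?arcs x \<union> ?arcs y)"
    using fin by (intro card_mono) auto
  also have "\<dots> \<le> card (Sigma ?S' (\<lambda>v. N v \<inter> ?S')) + card (?arcs x) + card (?arcs y)"
    by (meson card_Un_le add_right_mono le_trans)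
  also have "\<dots> \<le> card (Sigma ?S' (\<lambda>v. N v \<inter> ?S')) + 4 * d"
    using arcs[OF assms(4)] arcs[OF assms(5)] by simp
  finally show ?thesis .
qed

lemma greedy_matching:
  fixes N :: "'a \<Rightarrow> 'a set"
  assumes "finite S" and deg: "\<And>x. x \<in> S \<Longrightarrow> card (N x \<inter> S) \<le> d"
    and irrefl: "\<And>x. x \<notin> N x" and sym: "\<And>x y. y \<in> N x \<longleftrightarrow> x \<in> N y"
  shows "\<exists>M. (\<forall>(x, y) \<in> set M. x \<in> S \<and> y \<in> S \<and> y \<in> N x)
    \<and> distinct (concat (map (\<lambda>(x, y). [x, y]) M))
    \<and> card (Sigma S (\<lambda>x. N x \<inter> S)) \<le> 4 * d * length M"
  using assms(1) deg
proof (induction "card S" arbitrary: S rule: less_induct)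
  case less
  show ?case
  proof (cases "Sigma S (\<lambda>x. N x \<inter> S) = {}")
    case True
    then show ?thesis
      by (intro exI[of _ "[]"]) simp
  next
    case False
    then obtain x y where xy: "x \<in> S" "y \<in> S" "y \<in> N x"
      by blast
    define S' where "S' = S - {x, y}"
    have "card S' < card S"
      unfolding S'_def using xy less.prems(1) by (intro psubset_card_mono) auto
    moreover have "card (N v \<inter> S') \<le> d" if "v \<in> S'" for v
    proof -
      have "card (N v \<inter> S') \<le> card (N v \<inter> S)"
        using less.prems(1) unfolding S'_def by (intro card_mono) auto
      then show ?thesis
        using less.prems(2) that unfolding S'_def by force
    qed
    ultimately obtain M where M: "\<forall>(a, b) \<in> set M. a \<in> S' \<and> b \<in> S' \<and> b \<in> N a"
      "distinct (concat (map (\<lambda>(x, y). [x, y]) M))"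
      "card (Sigma S' (\<lambda>v. N v \<inter> S')) \<le> 4 * d * length M"
      using less.hyps less.prems(1) unfolding S'_def by blast
    have "x \<noteq> y"
      using xy irrefl by blast
    moreover have "set (concat (map (\<lambda>(x, y). [x, y]) M)) \<subseteq> S'"
      using M(1) by auto
    ultimately have "\<forall>(a, b) \<in> set ((x, y) # M). a \<in> S \<and> b \<in> S \<and> b \<in> N a"
      "distinct (concat (map (\<lambda>(x, y). [x, y]) ((x, y) # M)))"
      using M(1,2) xy unfolding S'_def by auto
    moreover have "card (Sigma S (\<lambda>v. N v \<inter> S)) \<le> 4 * d * length ((x, y) # M)"
      using card_arcs_remove_edge[OF less.prems sym xy(1,2)] M(3) unfolding S'_def by simp
    ultimately show ?thesis
      by blast
  qed
qed

locale simple_graph =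
  fixes V :: "'v set" and E :: "'v set set"
  assumes graph: "graph V E"
begin

definition nbrs :: "'v \<Rightarrow> 'v set" where
  "nbrs v = {u. {v, u} \<in> E}"

lemma finite_V: "finite V"
  using graph unfolding graph_def by blast

lemma edge_ends:
  assumes "{u, v} \<in> E"
  shows "u \<in> V \<and> v \<in> V \<and> u \<noteq> v"
proof -
  obtain a b where "a \<in> V" "b \<in> V" "a \<noteq> b" "{u, v} = {a, b}"
    using assms graph unfolding graph_def by blast
  then show ?thesis
    by (auto simp: doubleton_eq_iff)
qed

lemma finite_E: "finite E"
proof -
  have "E \<subseteq> Pow V"
    using edge_ends graph unfolding graph_def by fastforce
  then show ?thesis
    using finite_V by (simp add: finite_subset)
qed

lemma nbrs_subset: "nbrs v \<subseteq> V"
  unfolding nbrs_def using edge_ends by blast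

lemma finite_nbrs: "finite (nbrs v)"
  using nbrs_subset finite_V by (rule finite_subset)

lemma not_in_nbrs: "v \<notin> nbrs v"
  unfolding nbrs_def using edge_ends by blast

lemma nbrs_sym: "u \<in> nbrs v \<longleftrightarrow> v \<in> nbrs u"
  unfolding nbrs_def by (simp only: mem_Collect_eq insert_commute[of v u])

lemma degree_eq_card_nbrs: "degree E v = card (nbrs v)"
proof -
  have "{e \<in> E. v \<in> e} = (\<lambda>u. {v, u}) ` nbrs v"
  proof (intro equalityI subsetI)
    fix e
    assume "e \<in> {e \<in> E. v \<in> e}"
    then obtain a b where "e = {a, b}" "e \<in> E" "v \<in> e"
      using graph unfolding graph_def by blast
    then have "e = {v, if v = a then b else a}" "e \<in> E"
      by auto
    then show "e \<in> (\<lambda>u. {v, u}) ` nbrs v"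
      unfolding nbrs_def by blast
  qed (auto simp: nbrs_def)
  moreover have "inj_on (\<lambda>u. {v, u}) (nbrs v)"
    by (auto simp: inj_on_def doubleton_eq_iff)
  ultimately show ?thesis
    unfolding degree_def by (simp add: card_image)
qed

lemma sum_degree: "(\<Sum>v\<in>V. degree E v) = 2 * card E"
proof -
  have "\<forall>e\<in>E. card {v \<in> V. v \<in> e} = 2"
  proof
    fix e
    assume "e \<in> E"
    then obtain a b where "a \<in> V" "b \<in> V" "a \<noteq> b" "e = {a, b}"
      using graph unfolding graph_def by blast
    then have "{v \<in> V. v \<in> e} = {a, b}"
      by auto
    then show "card {v \<in> V. v \<in> e} = 2"
      using \<open>a \<noteq> b\<close> by simp
  qed
  then show ?thesis
    unfolding degree_def by (rule sum_multicount[OF finite_V finite_E])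
qed

lemma leaf_iff: "v \<in> leaves V E \<longleftrightarrow> v \<in> V \<and> card (nbrs v) = 1"
  unfolding leaves_def degree_eq_card_nbrs by simp

lemma leaf_nbr_unique: "a \<in> leaves V E \<Longrightarrow> x \<in> nbrs a \<Longrightarrow> y \<in> nbrs a \<Longrightarrow> x = y"
  unfolding leaf_iff by (metis card_1_singletonE singletonD)

lemma leaf_nbrs_eq: "a \<in> leaves V E \<Longrightarrow> x \<in> nbrs a \<Longrightarrow> nbrs a = {x}"
  using leaf_nbr_unique by blast

lemma sum_card_nbrs_swap:
  assumes "finite A" "finite B"
  shows "(\<Sum>a\<in>A. card (nbrs a \<inter> B)) = (\<Sum>b\<in>B. card (nbrs b \<inter> A))"
proof -
  have "(\<Sum>a\<in>A. card {b \<in> B. b \<in> nbrs a}) = (\<Sum>b\<in>B. card {a \<in> A. b \<in> nbrs a})"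
    using assms by (intro sum_multicount_gen) auto
  moreover have "{b \<in> B. b \<in> nbrs a} = nbrs a \<inter> B" "{a \<in> A. b \<in> nbrs a} = nbrs b \<inter> A" for a b
    using nbrs_sym by blast+
  ultimately show ?thesis
    by simp
qed

end

locale tree_graph = simple_graph V E for V :: "'v set" and E +
  assumes unique_path: "u \<in> V \<Longrightarrow> v \<in> V \<Longrightarrow> \<exists>!p. is_path E p u v"
begin

lemma tree_dist_eq:
  assumes q: "is_path E q u v" and "u \<in> V" "v \<in> V"
  shows "tree_dist E u v = length q - 1"
  unfolding tree_dist_def
proof (rule Least_equality)
  show "\<exists>p. is_walk E p u v \<and> length p = Suc (length q - 1)"
    using q unfolding is_path_def is_walk_def by (intro exI[of _ q]) auto
next
  fix n
  assume "\<exists>p. is_walk E p u v \<and> length p = Suc n"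
  then obtain p where "is_walk E p u v" "length p = Suc n"
    by blast
  moreover obtain q' where "is_path E q' u v" "length q' \<le> length p"
    using walk_to_path[OF \<open>is_walk E p u v\<close>] by blast
  moreover have "q' = q"
    using unique_path[OF assms(2,3)] q \<open>is_path E q' u v\<close> by blast
  ultimately show "length q - 1 \<le> n"
    by simp
qed

definition root_path :: "'v \<Rightarrow> 'v \<Rightarrow> 'v list" where
  "root_path r v = (THE p. is_path E p r v)"

lemma root_path: "r \<in> V \<Longrightarrow> v \<in> V \<Longrightarrow> is_path E (root_path r v) r v"
  unfolding root_path_def using theI'[OF unique_path] by blast

lemma root_path_unique: "r \<in> V \<Longrightarrow> v \<in> V \<Longrightarrow> is_path E q r v \<Longrightarrow> root_path r v = q"
  using root_path unique_path by blast

lemma path_edges_eq: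
  assumes "is_path E q u v" "u \<in> V" "v \<in> V"
  shows "path_edges E u v = walk_edges q"
  using root_path_unique[OF assms(2,3,1)] unfolding path_edges_def root_path_def by simp

lemma root_path_snoc:
  assumes r: "r \<in> V" and e: "{u, v} \<in> E" and v: "v \<notin> set (root_path r u)"
  shows "root_path r v = root_path r u @ [v]"
proof (rule root_path_unique[OF r])
  show "v \<in> V"
    using edge_ends[OF e] by blast
  have "is_path E (root_path r u) r u"
    using root_path[OF r] edge_ends[OF e] by blast
  then show "is_path E (root_path r u @ [v]) r v"
    using e v unfolding is_path_def is_walk_iff_successively
    by (auto simp: successively_append_iff)
qed

lemma root_path_not_both:
  assumes r: "r \<in> V" and e: "{u, v} \<in> E" and v: "v \<in> set (root_path r u)"
  shows "u \<notin> set (root_path r v)"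
proof -
  have uv: "u \<in> V" "v \<in> V" "u \<noteq> v"
    using edge_ends[OF e] by auto
  obtain xs ys where split: "root_path r u = xs @ v # ys"
    using v split_list by metis
  have path_u: "is_path E ((xs @ [v]) @ ys) r u"
    using root_path[OF r uv(1)] split by simp
  then have "is_path E (xs @ [v]) r v"
    unfolding is_path_def is_walk_iff_successively
    using successively_append_iff[of _ "xs @ [v]" ys]
    by (auto simp: hd_append split: if_splits)
  then have "root_path r v = xs @ [v]"
    by (rule root_path_unique[OF r uv(2)])
  moreover have "u \<in> set ys" "distinct ((xs @ [v]) @ ys)"
    using path_u uv(3) unfolding is_path_def is_walk_def
    by (auto simp: last_append split: if_splits)
  ultimately show ?thesis
    by auto
qed

text \<open>Every edge joins some vertex v \<noteq> r to its parent, the penultimate vertex of the path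
  from r to v.\<close>

lemma card_E_less_card_V:
  assumes "V \<noteq> {}"
  shows "card E < card V"
proof -
  obtain r where r: "r \<in> V"
    using assms by blast
  define parent_edge where "parent_edge v = {last (butlast (root_path r v)), v}" for v
  have edge: "{u, v} \<in> parent_edge ` (V - {r})"
    if e: "{u, v} \<in> E" and v: "v \<notin> set (root_path r u)" for u v
  proof -
    have "root_path r u \<noteq> []" "last (root_path r u) = u" "hd (root_path r u) = r"
      using root_path[OF r] edge_ends[OF e] unfolding is_path_def is_walk_def by auto
    then have "parent_edge v = {u, v}" "v \<noteq> r"
      using root_path_snoc[OF r e v] v hd_in_set[of "root_path r u"] unfolding parent_edge_def by auto
    then show ?thesis
      using edge_ends[OF e] by (metis DiffI image_eqI singletonD)
  qed
  have "E \<subseteq> parent_edge ` (V - {r})"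
  proof
    fix e
    assume "e \<in> E"
    then obtain u v where e: "e = {u, v}" "{u, v} \<in> E" "{v, u} \<in> E"
      using graph unfolding graph_def by (metis insert_commute)
    show "e \<in> parent_edge ` (V - {r})"
      using edge[OF e(2)] edge[OF e(3)] root_path_not_both[OF r e(2)] e(1)
      by (metis insert_commute)
  qed
  then have "card E \<le> card (parent_edge ` (V - {r}))"
    using finite_V by (intro card_mono) auto
  also have "\<dots> \<le> card (V - {r})"
    by (rule card_image_le) (simp add: finite_V)
  also have "\<dots> < card V"
    using finite_V r by (rule card_Diff1_less)
  finally show ?thesis .
qed

lemma star_if_nbrs_leaves:
  assumes p: "p \<in> V" and nl: "nbrs p \<subseteq> leaves V E"
  shows "V \<subseteq> insert p (nbrs p)"
proof
  fix v
  assume "v \<in> V"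
  then have q: "is_path E (root_path p v) p v"
    using root_path[OF p] by blast
  let ?q = "root_path p v"
  show "v \<in> insert p (nbrs p)"
  proof (cases "length ?q \<le> 2")
    case True
    moreover have "0 < length ?q"
      using q unfolding is_path_def is_walk_def by simp
    ultimately consider "length ?q = 1" | "length ?q = 2"
      by linarith
    then show ?thesis
    proof cases
      case 1
      then show ?thesis
        using q unfolding is_path_def is_walk_def by (auto simp: length_Suc_conv)
    next
      case 2
      then have "{?q ! 0, ?q ! 1} \<in> E" "?q ! 0 = p" "?q ! 1 = v"
        using q unfolding is_path_def is_walk_def by (auto simp: hd_conv_nth last_conv_nth)
      then show ?thesis
        unfolding nbrs_def by simp
    qed
  next
    case False
    then have "{?q ! 0, ?q ! 1} \<in> E" "{?q ! 1, ?q ! 2} \<in> E" "?q ! 0 = p"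
      using q unfolding is_path_def is_walk_def by (auto simp: numeral_2_eq_2 hd_conv_nth)
    then have "?q ! 1 \<in> leaves V E" "?q ! 0 \<in> nbrs (?q ! 1)" "?q ! 2 \<in> nbrs (?q ! 1)"
      using nl unfolding nbrs_def by (auto simp: insert_commute)
    then have "?q ! 0 = ?q ! 2"
      by (rule leaf_nbr_unique)
    moreover have "distinct ?q"
      using q unfolding is_path_def by blast
    ultimately show ?thesis
      using False nth_eq_iff_index_eq[of ?q 0 2] by (cases ?q) auto
  qed
qed

end

definition short_edge_disjoint_pairs :: "'v set set \<Rightarrow> ('x \<Rightarrow> 'v) \<Rightarrow> ('x \<times> 'x) list \<Rightarrow> bool" where
  "short_edge_disjoint_pairs E lab ps \<longleftrightarrow>
     (\<forall>i < length ps. fst (ps ! i) \<noteq> snd (ps ! i)) \<and>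
     (\<forall>i < length ps. \<forall>j < length ps. i \<noteq> j \<longrightarrow>
        {fst (ps ! i), snd (ps ! i)} \<inter> {fst (ps ! j), snd (ps ! j)} = {}) \<and>
     (\<forall>i < length ps. tree_dist E (lab (fst (ps ! i))) (lab (snd (ps ! i))) \<in> {2, 3}) \<and>
     (\<forall>i < length ps. \<forall>j < length ps. i \<noteq> j \<longrightarrow>
        path_edges E (lab (fst (ps ! i))) (lab (snd (ps ! i))) \<inter>
        path_edges E (lab (fst (ps ! j))) (lab (snd (ps ! j))) = {})"

lemma short_edge_disjoint_pairs_map:
  assumes "short_edge_disjoint_pairs E id (map (map_prod f f) ps)"
  shows "short_edge_disjoint_pairs E f ps"
  unfolding short_edge_disjoint_pairs_def
proof (intro conjI allI impI)
  have nth: "map (map_prod f f) ps ! i = (f (fst (ps ! i)), f (snd (ps ! i)))" if "i < length ps" for i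
    using that by (simp add: map_prod_def split_def)
  note single = assms[unfolded short_edge_disjoint_pairs_def, THEN conjunct1, rule_format, simplified]
    and dist = assms[unfolded short_edge_disjoint_pairs_def, THEN conjunct2, THEN conjunct2,
      THEN conjunct1, rule_format, simplified]
    and pairs = assms[unfolded short_edge_disjoint_pairs_def, THEN conjunct2, THEN conjunct1,
      rule_format, simplified]
    and edges = assms[unfolded short_edge_disjoint_pairs_def, THEN conjunct2, THEN conjunct2,
      THEN conjunct2, rule_format, simplified]
  fix i
  assume i: "i < length ps"
  show "fst (ps ! i) \<noteq> snd (ps ! i)" "tree_dist E (f (fst (ps ! i))) (f (snd (ps ! i))) \<in> {2, 3}"
    using single[OF i] dist[OF i] nth[OF i] by auto
  fix j
  assume j: "j < length ps" "i \<noteq> j"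
  show "{fst (ps ! i), snd (ps ! i)} \<inter> {fst (ps ! j), snd (ps ! j)} = {}"
    "path_edges E (f (fst (ps ! i))) (f (snd (ps ! i))) \<inter>
      path_edges E (f (fst (ps ! j))) (f (snd (ps ! j))) = {}"
    using pairs[OF i j] edges[OF i j] nth[OF i] nth[OF j(1)] by auto
qed

lemma pairs_preimage:
  assumes "set vs \<subseteq> f ` X \<times> f ` X"
  obtains ps where "map (map_prod f f) ps = vs" "set ps \<subseteq> X \<times> X"
proof (rule that)
  show "map (map_prod f f) (map (map_prod (inv_into X f) (inv_into X f)) vs) = vs"
    using assms by (auto simp: f_inv_into_f intro!: map_idI)
  show "set (map (map_prod (inv_into X f) (inv_into X f)) vs) \<subseteq> X \<times> X"
    using assms by (auto simp: inv_into_into)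
qed

lemma list_preimage:
  assumes "\<forall>x \<in> set xs. \<exists>y. P y \<and> f y = x"
  obtains ys where "map f ys = xs" "\<forall>y \<in> set ys. P y"
proof -
  obtain g where "\<forall>x \<in> set xs. P (g x) \<and> f (g x) = x"
    using assms by metis
  then show thesis
    by (intro that[of "map g xs"]) (auto intro: map_idI)
qed

locale binary_tree_4_leaves = tree_graph V E for V :: "'v set" and E +
  assumes degree_1_or_3: "v \<in> V \<Longrightarrow> degree E v = 1 \<or> degree E v = 3"
    and four_leaves: "4 \<le> card (leaves V E)"
begin

abbreviation L :: "'v set" where
  "L \<equiv> leaves V E"

definition internal :: "'v set" where
  "internal = V - L"

definition pendant :: "'v \<Rightarrow> 'v set" where
  "pendant p = nbrs p \<inter> L"

definition cherries :: "'v set" where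
  "cherries = {p \<in> internal. card (pendant p) = 2}"

definition singles :: "'v set" where
  "singles = {p \<in> internal. card (pendant p) = 1}"

definition bare :: "'v set" where
  "bare = {p \<in> internal. card (pendant p) = 0}"

lemma leaves_subset: "L \<subseteq> V"
  unfolding leaves_def by blast

lemma finite_leaves: "finite L"
  using leaves_subset finite_V by (rule finite_subset)

lemma finite_internal: "finite internal"
  unfolding internal_def using finite_V by simp

lemma card_nbrs_internal: "p \<in> internal \<Longrightarrow> card (nbrs p) = 3"
  using degree_1_or_3 leaf_iff degree_eq_card_nbrs unfolding internal_def by force

lemma nbrs_leaf_subset_internal:
  assumes a: "a \<in> L"
  shows "nbrs a \<subseteq> internal"
proof
  fix x
  assume x: "x \<in> nbrs a"
  have "x \<notin> L"
  proof
    assume "x \<in> L"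
    then have "V \<subseteq> {a, x}"
      using star_if_nbrs_leaves[of a] a x leaves_subset leaf_nbrs_eq[OF a x] by auto
    then have "card L \<le> card {a, x}"
      using leaves_subset by (intro card_mono) auto
    also have "\<dots> \<le> 2"
      by (simp add: card_insert_le_m1)
    finally show False
      using four_leaves by simp
  qed
  then show "x \<in> internal"
    using x nbrs_subset unfolding internal_def by blast
qed

lemma card_pendant_le_2:
  assumes p: "p \<in> internal"
  shows "card (pendant p) \<le> 2"
proof (rule ccontr)
  assume "\<not> card (pendant p) \<le> 2"
  moreover have sub: "pendant p \<subseteq> nbrs p"
    unfolding pendant_def by blast
  moreover have "card (pendant p) \<le> card (nbrs p)"
    using card_mono[OF finite_nbrs sub] .
  ultimately have "card (pendant p) = card (nbrs p)"
    using card_nbrs_internal[OF p] by simp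
  then have "nbrs p \<subseteq> L"
    using card_subset_eq[OF finite_nbrs sub] unfolding pendant_def by blast
  then have "V \<subseteq> insert p (nbrs p)"
    using star_if_nbrs_leaves p unfolding internal_def by blast
  then have "L \<subseteq> nbrs p"
    using leaves_subset p unfolding internal_def by blast
  then have "card L \<le> 3"
    using card_mono[OF finite_nbrs] card_nbrs_internal[OF p] by metis
  then show False
    using four_leaves by simp
qed

lemma internal_eq_Un: "internal = cherries \<union> singles \<union> bare"
  using card_pendant_le_2 unfolding cherries_def singles_def bare_def by force

lemma internal_parts_disjoint:
  "cherries \<inter> singles = {}" "cherries \<inter> bare = {}" "singles \<inter> bare = {}"
  unfolding cherries_def singles_def bare_def by auto

lemma finite_internal_parts: "finite cherries" "finite singles" "finite bare"
  using finite_internal unfolding cherries_def singles_def bare_def by auto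

lemma sum_internal:
  "(\<Sum>p\<in>internal. f p) = (\<Sum>p\<in>cherries. f p) + (\<Sum>p\<in>singles. f p) + (\<Sum>p\<in>bare. f p)"
  unfolding internal_eq_Un using finite_internal_parts internal_parts_disjoint
  by (simp add: sum.union_disjoint Int_Un_distrib2)

lemma card_internal_nbrs:
  assumes "p \<in> internal"
  shows "card (nbrs p \<inter> internal) = 3 - card (pendant p)"
proof -
  have "nbrs p \<inter> internal = nbrs p - pendant p"
    using nbrs_subset unfolding internal_def pendant_def by auto
  then show ?thesis
    using card_nbrs_internal[OF assms] finite_nbrs unfolding pendant_def
    by (simp add: card_Diff_subset)
qed

lemma card_leaves_eq: "card L = 2 * card cherries + card singles"
proof -
  have "card (nbrs a \<inter> internal) = 1" if "a \<in> L" for a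
    using that nbrs_leaf_subset_internal[OF that] leaf_iff by (simp add: Int_absorb2)
  then have "card L = (\<Sum>a\<in>L. card (nbrs a \<inter> internal))"
    by simp
  also have "\<dots> = (\<Sum>p\<in>internal. card (pendant p))"
    unfolding pendant_def using sum_card_nbrs_swap[OF finite_internal finite_leaves] by simp
  also have "\<dots> = 2 * card cherries + card singles"
    unfolding sum_internal by (simp add: cherries_def singles_def bare_def)
  finally show ?thesis .
qed

lemma card_internal_add_2_le: "card internal + 2 \<le> card L"
proof -
  have "2 * card E = (\<Sum>v\<in>internal. degree E v) + (\<Sum>v\<in>L. degree E v)"
    unfolding sum_degree[symmetric] internal_def
    using leaves_subset finite_V by (rule sum.subset_diff)
  also have "\<dots> = 3 * card internal + card L"
    using card_nbrs_internal by (simp add: leaf_iff degree_eq_card_nbrs)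
  finally have "2 * card E = 3 * card internal + card L" .
  moreover have "card internal = card V - card L"
    unfolding internal_def using finite_leaves leaves_subset by (rule card_Diff_subset)
  moreover have "card L \<le> card V"
    using leaves_subset finite_V by (rule card_mono[rotated])
  moreover have "V \<noteq> {}"
    using four_leaves leaves_subset by auto
  then have "card E < card V"
    by (rule card_E_less_card_V)
  ultimately show ?thesis
    by linarith
qed

lemma card_bare_add_2_le: "card bare + 2 \<le> card cherries"
proof -
  have "card internal = card cherries + card singles + card bare"
    using sum_internal[of "\<lambda>_. 1::nat"] by simp
  then show ?thesis
    using card_internal_add_2_le card_leaves_eq by linarith
qed

lemma card_nbrs_singles_le:
  assumes "p \<in> internal"
  shows "card (nbrs p \<inter> singles) \<le> 3 - card (pendant p)"
proof -
  have "card (nbrs p \<inter> singles) \<le> card (nbrs p \<inter> internal)"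
    using finite_nbrs internal_eq_Un by (intro card_mono) auto
  then show ?thesis
    using card_internal_nbrs[OF assms] by simp
qed

lemma card_singles_le:
  "2 * card singles \<le> card (Sigma singles (\<lambda>p. nbrs p \<inter> singles)) + card cherries + 3 * card bare"
proof -
  let ?others = "cherries \<union> bare"
  have "card (nbrs p \<inter> singles) + card (nbrs p \<inter> ?others) = 2" if p: "p \<in> singles" for p
  proof -
    have "nbrs p \<inter> internal = (nbrs p \<inter> singles) \<union> (nbrs p \<inter> ?others)"
      using internal_eq_Un by blast
    moreover have "(nbrs p \<inter> singles) \<inter> (nbrs p \<inter> ?others) = {}"
      using internal_parts_disjoint by blast
    ultimately have "card (nbrs p \<inter> internal) = card (nbrs p \<inter> singles) + card (nbrs p \<inter> ?others)"
      using finite_nbrs by (simp add: card_Un_disjoint)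
    moreover have "card (nbrs p \<inter> internal) = 2"
      using p card_internal_nbrs unfolding singles_def by simp
    ultimately show ?thesis
      by simp
  qed
  then have "2 * card singles
      = (\<Sum>p\<in>singles. card (nbrs p \<inter> singles)) + (\<Sum>p\<in>singles. card (nbrs p \<inter> ?others))"
    by (simp add: sum.distrib[symmetric])
  also have "(\<Sum>p\<in>singles. card (nbrs p \<inter> singles)) = card (Sigma singles (\<lambda>p. nbrs p \<inter> singles))"
    using finite_internal_parts finite_nbrs by (simp add: card_SigmaI)
  also have "(\<Sum>p\<in>singles. card (nbrs p \<inter> ?others))
      = (\<Sum>x\<in>cherries. card (nbrs x \<inter> singles)) + (\<Sum>x\<in>bare. card (nbrs x \<inter> singles))"
    using finite_internal_parts internal_parts_disjoint
    by (simp add: sum_card_nbrs_swap sum.union_disjoint)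
  also have "\<dots> \<le> (\<Sum>x\<in>cherries. 1) + (\<Sum>x\<in>bare. 3)"
    using card_nbrs_singles_le unfolding cherries_def bare_def by (intro add_mono sum_mono) force+
  finally show ?thesis
    by simp
qed

lemma singles_matching:
  obtains M where "\<forall>(p, p') \<in> set M. p \<in> singles \<and> p' \<in> singles \<and> p' \<in> nbrs p"
    "distinct (concat (map (\<lambda>(p, p'). [p, p']) M))"
    "card (Sigma singles (\<lambda>p. nbrs p \<inter> singles)) \<le> 8 * length M"
proof -
  have "card (nbrs p \<inter> singles) \<le> 2" if "p \<in> singles" for p
    using that card_nbrs_singles_le unfolding singles_def by fastforce
  then obtain M where "\<forall>(p, p') \<in> set M. p \<in> singles \<and> p' \<in> singles \<and> p' \<in> nbrs p"
    "distinct (concat (map (\<lambda>(p, p'). [p, p']) M))"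
    "card (Sigma singles (\<lambda>p. nbrs p \<inter> singles)) \<le> 4 * 2 * length M"
    using greedy_matching[OF finite_internal_parts(2) _ not_in_nbrs nbrs_sym] by blast
  then show thesis
    using that by simp
qed

definition short_leaf_path :: "'v list \<Rightarrow> bool" where
  "short_leaf_path q \<longleftrightarrow> length q \<in> {3, 4} \<and> is_path E q (hd q) (last q) \<and>
     hd q \<in> L \<and> last q \<in> L \<and> set (inner_vertices q) \<subseteq> internal"

lemma short_leaf_path_through_cherry:
  assumes "p \<in> cherries"
  shows "\<exists>q. short_leaf_path q \<and> inner_vertices q = [p]"
proof -
  have "card (pendant p) = 2"
    using assms unfolding cherries_def by simp
  then obtain a b where "pendant p = {a, b}" "a \<noteq> b"
    by (meson card_2_iff)
  with assms have "short_leaf_path [a, p, b]"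
    unfolding short_leaf_path_def is_path_def is_walk_iff_successively
      cherries_def pendant_def internal_def inner_vertices_def nbrs_def
    by (auto simp: insert_commute)
  then show ?thesis
    by (auto simp: inner_vertices_def)
qed

lemma adjacent_short_leaf_path:
  assumes "p \<in> internal" "p' \<in> internal" "p' \<in> nbrs p" "a \<in> pendant p" "b \<in> pendant p'"
  shows "short_leaf_path [a, p, p', b]"
proof -
  have "p \<noteq> p'"
    using assms(3) not_in_nbrs by blast
  moreover have "a \<noteq> b"
  proof
    assume "a = b"
    then have "p = p'"
      using assms(4,5) leaf_nbr_unique nbrs_sym unfolding pendant_def by blast
    with \<open>p \<noteq> p'\<close> show False ..
  qed
  ultimately show ?thesis
    using assms unfolding short_leaf_path_def is_path_def is_walk_iff_successively
      pendant_def internal_def inner_vertices_def nbrs_def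
    by (auto simp: insert_commute)
qed

lemma short_leaf_path_through_singles:
  assumes "p \<in> singles" "p' \<in> singles" "p' \<in> nbrs p"
  shows "\<exists>q. short_leaf_path q \<and> inner_vertices q = [p, p']"
proof -
  have "pendant p \<noteq> {}" "pendant p' \<noteq> {}"
    using assms(1,2) unfolding singles_def by auto
  then obtain a b where "a \<in> pendant p" "b \<in> pendant p'"
    by blast
  with assms have "short_leaf_path [a, p, p', b]"
    unfolding singles_def by (blast intro: adjacent_short_leaf_path)
  then show ?thesis
    by (auto simp: inner_vertices_def)
qed

lemma short_leaf_path_props:
  assumes "short_leaf_path q"
  shows "hd q \<noteq> last q" "tree_dist E (hd q) (last q) \<in> {2, 3}"
    "path_edges E (hd q) (last q) = walk_edges q"
proof -
  have q: "is_path E q (hd q) (last q)" "hd q \<in> V" "last q \<in> V" "length q \<in> {3, 4}"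
    using assms leaves_subset unfolding short_leaf_path_def by auto
  then show "hd q \<noteq> last q"
    unfolding is_path_def by (cases q rule: remdups_adj.cases) auto
  show "tree_dist E (hd q) (last q) \<in> {2, 3}"
    using tree_dist_eq[OF q(1-3)] q(4) by auto
  show "path_edges E (hd q) (last q) = walk_edges q"
    using path_edges_eq[OF q(1-3)] .
qed

lemma short_leaf_path_walk_edges: "short_leaf_path q \<Longrightarrow> walk_edges q \<subseteq> E"
  using walk_edges_subset[of E q "hd q" "last q"] unfolding short_leaf_path_def is_path_def by simp

lemma short_leaf_paths_ends_disjoint:
  assumes q1: "short_leaf_path q1" and q2: "short_leaf_path q2"
    and disj: "set (inner_vertices q1) \<inter> set (inner_vertices q2) = {}"
  shows "{hd q1, last q1} \<inter> {hd q2, last q2} = {}"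
proof (rule ccontr)
  assume "{hd q1, last q1} \<inter> {hd q2, last q2} \<noteq> {}"
  then obtain x where x: "x \<in> {hd q1, last q1}" "x \<in> {hd q2, last q2}"
    by blast
  then have "x \<in> L"
    using q1 unfolding short_leaf_path_def by auto
  have long: "3 \<le> length q1" "3 \<le> length q2"
    using q1 q2 unfolding short_leaf_path_def by auto
  obtain m1 where m1: "m1 \<in> set (inner_vertices q1)" "{x, m1} \<in> walk_edges q1"
    by (rule ends_adjacent_inner_vertices[OF long(1) x(1)])
  obtain m2 where m2: "m2 \<in> set (inner_vertices q2)" "{x, m2} \<in> walk_edges q2"
    by (rule ends_adjacent_inner_vertices[OF long(2) x(2)])
  have "m1 \<in> nbrs x" "m2 \<in> nbrs x"
    using m1(2) m2(2) short_leaf_path_walk_edges[OF q1] short_leaf_path_walk_edges[OF q2]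
    unfolding nbrs_def by blast+
  then have "m1 = m2"
    by (rule leaf_nbr_unique[OF \<open>x \<in> L\<close>])
  then show False
    using m1(1) m2(1) disj by blast
qed

lemma short_leaf_paths_edges_disjoint:
  assumes q1: "short_leaf_path q1" and q2: "short_leaf_path q2"
    and disj: "set (inner_vertices q1) \<inter> set (inner_vertices q2) = {}"
  shows "walk_edges q1 \<inter> walk_edges q2 = {}"
proof (rule ccontr)
  assume "walk_edges q1 \<inter> walk_edges q2 \<noteq> {}"
  then obtain e where e: "e \<in> walk_edges q1" "e \<in> walk_edges q2"
    by blast
  have long: "3 \<le> length q1" "3 \<le> length q2"
    using q1 q2 unfolding short_leaf_path_def by auto
  obtain x m where xm: "e = {x, m}" "x \<in> set q1" "m \<in> set (inner_vertices q1)"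
    by (rule walk_edges_meet_inner_vertices[OF long(1) e(1)])
  obtain y m' where ym: "e = {y, m'}" "y \<in> set q2" "m' \<in> set (inner_vertices q2)"
    by (rule walk_edges_meet_inner_vertices[OF long(2) e(2)])
  have "m \<noteq> m'"
    using xm(3) ym(3) disj by blast
  then have "m = y"
    using xm(1) ym(1) by (auto simp: doubleton_eq_iff)
  moreover have "m \<notin> L"
    using xm(3) q1 unfolding short_leaf_path_def internal_def by blast
  then have "m \<notin> {hd q2, last q2}"
    using q2 unfolding short_leaf_path_def by blast
  ultimately have "m \<in> set (inner_vertices q2)"
    using ym(2) set_subset_ends_inner_vertices[of q2] by blast
  then show False
    using xm(3) disj by blast
qed

lemma short_leaf_paths_exist:
  "\<exists>Q. card L \<le> 4 * length Q \<and> (\<forall>q \<in> set Q. short_leaf_path q) \<and>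
     distinct (concat (map inner_vertices Q))"
proof -
  obtain M where M: "\<forall>(p, p') \<in> set M. p \<in> singles \<and> p' \<in> singles \<and> p' \<in> nbrs p"
    "distinct (concat (map (\<lambda>(p, p'). [p, p']) M))"
    "card (Sigma singles (\<lambda>p. nbrs p \<inter> singles)) \<le> 8 * length M"
    by (rule singles_matching)
  obtain cs where cs: "set cs = cherries" "distinct cs"
    using finite_distinct_list[OF finite_internal_parts(1)] by blast
  define W where "W = map (\<lambda>p. [p]) cs @ map (\<lambda>(p, p'). [p, p']) M"
  have "\<forall>w \<in> set W. \<exists>q. short_leaf_path q \<and> inner_vertices q = w"
    using cs(1) M(1) short_leaf_path_through_cherry short_leaf_path_through_singles
    unfolding W_def by auto
  then obtain Q where Q: "map inner_vertices Q = W" "\<forall>q \<in> set Q. short_leaf_path q"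
    by (rule list_preimage)
  have "concat W = cs @ concat (map (\<lambda>(p, p'). [p, p']) M)"
    unfolding W_def by (simp add: comp_def)
  then have "distinct (concat (map inner_vertices Q))"
    using Q(1) cs M(1,2) internal_parts_disjoint by auto
  moreover have "length Q = card cherries + length M"
    using arg_cong[OF Q(1), of length] distinct_card[OF cs(2)] cs(1) unfolding W_def by simp
  then have "card L \<le> 4 * length Q"
    using card_leaves_eq card_bare_add_2_le card_singles_le M(3) by linarith
  ultimately show ?thesis
    using Q(2) by blast
qed

lemma short_leaf_pairs_exist:
  "\<exists>vs. card L \<le> 4 * length vs \<and> set vs \<subseteq> L \<times> L \<and> short_edge_disjoint_pairs E id vs"
proof -
  obtain Q where Q: "card L \<le> 4 * length Q" "\<forall>q \<in> set Q. short_leaf_path q"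
    "distinct (concat (map inner_vertices Q))"
    using short_leaf_paths_exist by blast
  let ?vs = "map (\<lambda>q. (hd q, last q)) Q"
  have "set ?vs \<subseteq> L \<times> L"
    using Q(2) unfolding short_leaf_path_def by auto
  moreover have "short_edge_disjoint_pairs E id ?vs"
    unfolding short_edge_disjoint_pairs_def id_apply
  proof (intro conjI allI impI)
    fix i
    assume "i < length ?vs"
    then have short_i: "short_leaf_path (Q ! i)" and nth_i: "?vs ! i = (hd (Q ! i), last (Q ! i))"
      using Q(2) by simp_all
    show "fst (?vs ! i) \<noteq> snd (?vs ! i)" "tree_dist E (fst (?vs ! i)) (snd (?vs ! i)) \<in> {2, 3}"
      using short_leaf_path_props[OF short_i] nth_i by simp_all
    fix j
    assume "j < length ?vs" "i \<noteq> j"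
    then have short_j: "short_leaf_path (Q ! j)" and nth_j: "?vs ! j = (hd (Q ! j), last (Q ! j))"
      and inner: "set (inner_vertices (Q ! i)) \<inter> set (inner_vertices (Q ! j)) = {}"
      using Q(2) distinct_concat_nth_disjoint[OF Q(3)] \<open>i < length ?vs\<close> by simp_all
    show "{fst (?vs ! i), snd (?vs ! i)} \<inter> {fst (?vs ! j), snd (?vs ! j)} = {}"
      using short_leaf_paths_ends_disjoint[OF short_i short_j inner] nth_i nth_j by simp
    show "path_edges E (fst (?vs ! i)) (snd (?vs ! i)) \<inter>
        path_edges E (fst (?vs ! j)) (snd (?vs ! j)) = {}"
      using short_leaf_paths_edges_disjoint[OF short_i short_j inner] nth_i nth_j
        short_leaf_path_props(3)[OF short_i] short_leaf_path_props(3)[OF short_j]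
      by simp
  qed
  ultimately show ?thesis
    using Q(1) by (intro exI[of _ ?vs]) simp
qed

end

theorem lemma3p2:
  fixes V :: "'v set" and E :: "'v set set" and X :: "'x set" and lab :: "'x \<Rightarrow> 'v"
  assumes "binary_phylo_tree V E X lab"
    and "finite X" and "card X \<ge> 4"
  shows "\<exists>ps :: ('x \<times> 'x) list.
           real (length ps) \<ge> real (card X) / 4 \<and>
           (\<forall>i < length ps. fst (ps ! i) \<in> X \<and> snd (ps ! i) \<in> X \<and> fst (ps ! i) \<noteq> snd (ps ! i)) \<and>
           (\<forall>i < length ps. \<forall>j < length ps. i \<noteq> j \<longrightarrow>
               {fst (ps ! i), snd (ps ! i)} \<inter> {fst (ps ! j), snd (ps ! j)} = {}) \<and>
           (\<forall>i < length ps. tree_dist E (lab (fst (ps ! i))) (lab (snd (ps ! i))) \<in> {2, 3}) \<and>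
           (\<forall>i < length ps. \<forall>j < length ps. i \<noteq> j \<longrightarrow>
               path_edges E (lab (fst (ps ! i))) (lab (snd (ps ! i))) \<inter>
               path_edges E (lab (fst (ps ! j))) (lab (snd (ps ! j))) = {})"
proof -
  have bij: "bij_betw lab X (leaves V E)"
    using assms(1) unfolding binary_phylo_tree_def by blast
  then have card: "card (leaves V E) = card X"
    by (simp add: bij_betw_same_card)
  interpret binary_tree_4_leaves V E
    using assms card unfolding binary_phylo_tree_def binary_tree_def is_tree_def
    by unfold_locales auto
  obtain vs where vs: "card L \<le> 4 * length vs" "set vs \<subseteq> L \<times> L" "short_edge_disjoint_pairs E id vs"
    using short_leaf_pairs_exist by blast
  have "set vs \<subseteq> lab ` X \<times> lab ` X"
    using vs(2) bij unfolding bij_betw_def by simp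
  then obtain ps where ps: "map (map_prod lab lab) ps = vs" "set ps \<subseteq> X \<times> X"
    by (rule pairs_preimage)
  have pairs: "short_edge_disjoint_pairs E lab ps"
    using vs(3) unfolding ps(1)[symmetric] by (rule short_edge_disjoint_pairs_map)
  have "fst (ps ! i) \<in> X \<and> snd (ps ! i) \<in> X" if "i < length ps" for i
    using ps(2) nth_mem[OF that] by (auto simp: mem_Times_iff)
  then have "\<forall>i < length ps. fst (ps ! i) \<in> X \<and> snd (ps ! i) \<in> X \<and> fst (ps ! i) \<noteq> snd (ps ! i)"
    using pairs unfolding short_edge_disjoint_pairs_def by simp
  moreover have "real (card X) / 4 \<le> real (length ps)"
    using vs(1) ps(1) card by auto
  ultimately show ?thesis
    using pairs unfolding short_edge_disjoint_pairs_def by (intro exI[of _ ps]) simp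
qed

end
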